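(* Fix the CE group 0 parameters: $\alpha>2$, $\rho,P,\lambda_B,\gamma_{th}>0$, $\sigma^2\ge0$, $a:=\mathcal{A}_0^1\mathcal{R}_0^1\in(0,1]$, $\lambda_0^a>0$, a repetition number $K_0\in\{1,2\}$, and $c=3.575$. Suppose the following: - Each device (the typical device, indexed $m=0$, and each of the $N_0$ intra-cell interfering devices, indexed $m=1,\dots,N_0$) transmits its preamble $K_0$ times. - Repetition $k$ of device $m$ succeeds (event $\theta_k$) iff all 4 of its symbol-group SINRs are $\ge\gamma_{th}$. - For every set of $k$ repetitions, the joint success probability of device $m$ equals the probability of Lemma 2 with $l=4k$. Explicitly, this probability is $q(4k)$, where $$q(l)=\exp\Big(-\frac{l\gamma_{th}\sigma^2}{\rho}-\frac{2\gamma_{th}^{2/\alpha}a\lambda_0^a\gamma\big(2,\pi\lambda_B(P/\rho)^{2/\alpha}\big)}{\lambda_B\big(1-\exp(-\pi\lambda_B(P/\rho)^{2/\alpha})\big)}\mathcal{F}_0(l)\Big),\qquad \mathcal{F}_0(l)=\int_{\gamma_{th}^{-1/\alpha}}^{\infty}\Big[1-\Big(\frac{1}{1+y^{-\alpha}}\Big)^{l}\Big]y\,dy.$$ - The number $N_0$ of intra-cell interferers has PMF $$\mathbb{P}[N_0=n]=\frac{c^{c+1}\Gamma(n+c+1)(a\lambda_0^a/\lambda_B)^n}{\Gamma(c+1)\Gamma(n+1)(a\lambda_0^a/\lambda_B+c)^{n+c+1}}.$$ Define the preamble transmission success probability of device $m$ as $\mathbb{P}_{S,0,m}[K_0]=\mathbb{P}\big[\bigcup_{k=1}^{K_0}\theta_k\big]$.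 Define the RACH success probability as $$\mathcal{P}_0^1=\sum_{n=0}^{\infty}\mathbb{P}[N_0=n]\,\mathbb{P}_{S,0,0}[K_0]\prod_{m=1}^{n}\big(1-\mathbb{P}_{S,0,m}[K_0]\big).$$ Then $$\mathcal{P}_0^1=\sum_{n=0}^{\infty}\mathbb{P}[N_0=n]\,\Theta_0\,(1-\Theta_0)^{n},\qquad\Theta_0=\sum_{k=1}^{K_0}(-1)^{k+1}\binom{K_0}{k}q(4k).$$
   Context: This is the random access (RACH) model for CE group 0 in an NB-IoT network in the first time slot; group-0 devices use path-loss inversion power control with target $\rho$. The RACH attempt of the typical device succeeds iff its preamble is successfully received in at least one repetition and no intra-cell device using the same preamble is also successfully received (no collision). - Base stations form a PPP of intensity $\lambda_B$. - $\lambda_0^a=\lambda_0/S_0$ is the intensity of group-0 devices choosing a given preamble among $S_0$ preambles. - $\mathcal{A}_0^1$ is the probability that a device's buffer is non-empty, and $\mathcal{R}_0^1$ the probability that it is not restricted by the access scheme. - $\gamma(a,b)$ is the lower incomplete gamma function. *)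

theory Defs
  imports "HOL-Probability.Probability"
begin

definition lower_inc_gamma :: "real \<Rightarrow> real \<Rightarrow> real" where
  "lower_inc_gamma s x = (LBINT t=0..x. t powr (s - 1) * exp (- t))"

definition F0 :: "real \<Rightarrow> real \<Rightarrow> nat \<Rightarrow> real" where
  "F0 \<alpha> \<gamma>th l =
     (LINT y:{\<gamma>th powr (-1/\<alpha>)..}|lborel. (1 - (1 / (1 + y powr (-\<alpha>))) ^ l) * y)"

definition q_succ :: "real \<Rightarrow> real \<Rightarrow> real \<Rightarrow> real \<Rightarrow> real \<Rightarrow> real \<Rightarrow> real \<Rightarrow> real \<Rightarrow> nat \<Rightarrow> real" where
  "q_succ \<alpha> \<rho> P lamB \<gamma>th \<sigma>2 a lam0a l =
     exp (- (real l * \<gamma>th * \<sigma>2 / \<rho>)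
          - 2 * \<gamma>th powr (2 / \<alpha>) * a * lam0a
              * lower_inc_gamma 2 (pi * lamB * (P / \<rho>) powr (2 / \<alpha>))
            / (lamB * (1 - exp (- pi * lamB * (P / \<rho>) powr (2 / \<alpha>))))
            * F0 \<alpha> \<gamma>th l)"

definition c_const :: real where "c_const = 3.575"

definition pmf_N0 :: "real \<Rightarrow> real \<Rightarrow> real \<Rightarrow> nat \<Rightarrow> real" where
  "pmf_N0 a lam0a lamB n =
     (let c = c_const; r = a * lam0a / lamB in
      c powr (c + 1) * Gamma (real n + c + 1) * r ^ n
      / (Gamma (c + 1) * Gamma (real n + 1) * (r + c) powr (real n + c + 1)))"

end

theory Submission
  imports Defs
begin

text \<open>By inclusion-exclusion, the probability that some repetition of a device succeeds is an
  alternating sum of joint success probabilities of sets of repetitions. These depend only on the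
  size k of the set, so the k-th term is binomial(K0,k) q(4k): every device succeeds with the same
  probability Theta0, and the product over the n interferers becomes (1 - Theta0)^n. The argument
  works for every K0 and uses none of the channel parameters.\<close>

lemma measure_UN_inclusion_exclusion:
  assumes "finite I" and "\<And>i. i \<in> I \<Longrightarrow> A i \<in> fmeasurable M"
  shows "measure M (\<Union>(A ` I)) =
    (\<Sum>J | J \<subseteq> I \<and> J \<noteq> {}. (-1) ^ (card J + 1) * measure M (\<Inter>(A ` J)))"
proof -
  interpret Incl_Excl "\<lambda>S. S \<in> fmeasurable M" "measure M"
    by unfold_locales (auto simp: disjnt_def measure_Union fmeasurableD2)
  show ?thesis
    using restricted_indexed assms by blast
qed

lemma sum_nonempty_subsets_by_card:
  fixes g :: "nat \<Rightarrow> 'a::comm_semiring_1"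
  assumes "finite I"
  shows "(\<Sum>J | J \<subseteq> I \<and> J \<noteq> {}. g (card J)) = (\<Sum>k=1..card I. of_nat (card I choose k) * g k)"
proof -
  have "(\<Sum>J | J \<subseteq> I \<and> J \<noteq> {}. g (card J))
      = (\<Sum>k=1..card I. \<Sum>J | J \<in> {J. J \<subseteq> I \<and> J \<noteq> {}} \<and> card J = k. g (card J))"
    using assms by (intro sum.group [symmetric]) (auto simp: Suc_le_eq card_gt_0_iff card_mono finite_subset)
  also have "\<dots> = (\<Sum>k=1..card I. of_nat (card I choose k) * g k)"
  proof (rule sum.cong [OF refl])
    fix k assume "k \<in> {1..card I}"
    then have "{J. J \<in> {J. J \<subseteq> I \<and> J \<noteq> {}} \<and> card J = k} = {J. J \<subseteq> I \<and> card J = k}"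
      by auto
    then show "(\<Sum>J | J \<in> {J. J \<subseteq> I \<and> J \<noteq> {}} \<and> card J = k. g (card J)) = of_nat (card I choose k) * g k"
      using assms by (simp add: n_subsets)
  qed
  finally show ?thesis .
qed

lemma measure_UN_exchangeable:
  assumes "finite I" and "\<And>i. i \<in> I \<Longrightarrow> A i \<in> fmeasurable M"
    and "\<And>J. J \<subseteq> I \<Longrightarrow> J \<noteq> {} \<Longrightarrow> measure M (\<Inter>(A ` J)) = p (card J)"
  shows "measure M (\<Union>(A ` I)) = (\<Sum>k=1..card I. (-1) ^ (k + 1) * real (card I choose k) * p k)"
proof -
  have "measure M (\<Union>(A ` I)) = (\<Sum>J | J \<subseteq> I \<and> J \<noteq> {}. (-1) ^ (card J + 1) * p (card J))"
    using assms by (simp add: measure_UN_inclusion_exclusion)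
  also have "\<dots> = (\<Sum>k=1..card I. real (card I choose k) * ((-1) ^ (k + 1) * p k))"
    using assms(1) by (rule sum_nonempty_subsets_by_card)
  finally show ?thesis
    by (simp add: mult_ac)
qed

theorem theorem1:
  fixes M :: "'w measure"
    and \<alpha> \<rho> P lamB \<gamma>th \<sigma>2 a lam0a :: real
    and K0 :: nat
    and sinr :: "nat \<Rightarrow> nat \<Rightarrow> nat \<Rightarrow> 'w \<Rightarrow> real"
    and \<theta> :: "nat \<Rightarrow> nat \<Rightarrow> 'w set"
    and PS :: "nat \<Rightarrow> real"
    and P01 :: real
  assumes "prob_space M"
    and "\<alpha> > 2" and "\<rho> > 0" and "P > 0" and "lamB > 0" and "\<gamma>th > 0" and "\<sigma>2 \<ge> 0"
    and "0 < a" and "a \<le> 1" and "lam0a > 0"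
    and "K0 \<in> {1, 2}"
    and sinr_rv: "\<And>m k j. sinr m k j \<in> borel_measurable M"
    and theta_def: "\<And>m k. \<theta> m k = {\<omega> \<in> space M. \<forall>j<4. sinr m k j \<omega> \<ge> \<gamma>th}"
    and joint: "\<And>m J. J \<subseteq> {1..K0} \<Longrightarrow> J \<noteq> {} \<Longrightarrow>
        measure M (\<Inter>k\<in>J. \<theta> m k) = q_succ \<alpha> \<rho> P lamB \<gamma>th \<sigma>2 a lam0a (4 * card J)"
    and PS_def: "\<And>m. PS m = measure M (\<Union>k\<in>{1..K0}. \<theta> m k)"
    and P01_def: "P01 = (\<Sum>n. pmf_N0 a lam0a lamB n * PS 0 * (\<Prod>m\<in>{1..n}. 1 - PS m))"
  shows "P01 = (\<Sum>n. pmf_N0 a lam0a lamB n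
                 * (\<Sum>k=1..K0. (-1) ^ (k + 1) * real (K0 choose k) * q_succ \<alpha> \<rho> P lamB \<gamma>th \<sigma>2 a lam0a (4 * k))
                 * (1 - (\<Sum>k=1..K0. (-1) ^ (k + 1) * real (K0 choose k) * q_succ \<alpha> \<rho> P lamB \<gamma>th \<sigma>2 a lam0a (4 * k))) ^ n)"
proof -
  interpret prob_space M by fact
  let ?\<Theta> = "\<Sum>k=1..K0. (-1) ^ (k + 1) * real (K0 choose k) * q_succ \<alpha> \<rho> P lamB \<gamma>th \<sigma>2 a lam0a (4 * k)"
  have "\<theta> m k \<in> fmeasurable M" for m k
    unfolding fmeasurable_eq_sets theta_def using sinr_rv by measurable
  then have "PS m = ?\<Theta>" for m
    unfolding PS_def using measure_UN_exchangeable[of "{1..K0}" "\<theta> m" M] joint by simp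
  then show ?thesis
    unfolding P01_def by simp
qed

end
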